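(* Let $(A,B)$ be controllable and let $H^{(i)}$ be the sequence $H^{(i+1)}=G+\gamma M(L(H^{(i)}))^\top H^{(i)} M(L(H^{(i)}))$ with $H^{(0)}=0$. Then there exists a matrix $Y$ such that $0\preceq H^{(i)}\preceq Y$ for all $i$.
   Context: Let $A\in\mathbb{R}^{n\times n}$, $B\in\mathbb{R}^{n\times m}$, $Q=Q^\top\succeq0$, $R=R^\top\succ0$, $\gamma\in[0,1)$, $N\in\mathbb{N}$. Symmetric matrices $H$ of size $((N+2)n+m)$ are partitioned into blocks $h_{ab}$, $a,b\in\{x,u,r_0,\dots,r_N\}$ (sizes $n,m,n,\dots,n$). For $H$ with invertible $h_{uu}$, $L(H)=-h_{uu}^{-1}[h_{ux},h_{ur_1},\dots,h_{ur_N}]=[L_x,L_1,\dots,L_N]$, and $L(0):=0$. $G=\begin{bmatrix}Q&0&-Q&0\\0&R&0&0\\-Q&0&Q&0\\0&0&0&0\end{bmatrix}$ (blocks $x$, $u$, $r_0$, $(r_1,\dots,r_N)$). $M(L)$ is the square matrix mapping $[x;u;r_0;\dots;r_N]$ to $[Ax+Bu;\;L_x(Ax+Bu)+L_1r_2+\dots+L_{N-1}r_N;\;r_1;\dots;r_N;\;0]$. *)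

theory Defs
  imports "Jordan_Normal_Form.Gauss_Jordan_Elimination" "Jordan_Normal_Form.DL_Rank"
begin

(* Dimensions: state n, input m, horizon N.  Joint vector [x; u; r_0; ...; r_N] has
   dimension d = (N+2)*n + m; block offsets: x at 0, u at n, r_k at n + m + k*n. *)

definition dimH :: "nat \<Rightarrow> nat \<Rightarrow> nat \<Rightarrow> nat" where
  "dimH n m N = (N + 2) * n + m"

definition sel :: "nat \<Rightarrow> nat \<Rightarrow> nat \<Rightarrow> real mat" where
  "sel k off d = mat k d (\<lambda>(i,j). if j = off + i then 1 else 0)"

definition psd :: "nat \<Rightarrow> real mat \<Rightarrow> bool" where
  "psd d X \<longleftrightarrow> X \<in> carrier_mat d d \<and> transpose_mat X = X \<and>
     (\<forall>v \<in> carrier_vec d. v \<bullet> (X *\<^sub>v v) \<ge> 0)"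

definition pd :: "nat \<Rightarrow> real mat \<Rightarrow> bool" where
  "pd d X \<longleftrightarrow> X \<in> carrier_mat d d \<and> transpose_mat X = X \<and>
     (\<forall>v \<in> carrier_vec d. v \<noteq> 0\<^sub>v d \<longrightarrow> v \<bullet> (X *\<^sub>v v) > 0)"

definition loewner_le :: "nat \<Rightarrow> real mat \<Rightarrow> real mat \<Rightarrow> bool" where
  "loewner_le d X Y \<longleftrightarrow> X \<in> carrier_mat d d \<and> Y \<in> carrier_mat d d \<and> psd d (Y - X)"

definition ctrb :: "nat \<Rightarrow> nat \<Rightarrow> real mat \<Rightarrow> real mat \<Rightarrow> real mat" where
  "ctrb n m A B = mat n (n * m) (\<lambda>(i,j). ((A ^\<^sub>m (j div m)) * B) $$ (i, j mod m))"

definition controllable :: "nat \<Rightarrow> nat \<Rightarrow> real mat \<Rightarrow> real mat \<Rightarrow> bool" where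
  "controllable n m A B \<longleftrightarrow> vec_space.rank n (ctrb n m A B) = n"

(* column picker d x (N+1)n : selects the blocks x, r_1, ..., r_N *)
definition colsel :: "nat \<Rightarrow> nat \<Rightarrow> nat \<Rightarrow> real mat" where
  "colsel n m N = mat (dimH n m N) ((N + 1) * n)
     (\<lambda>(j,i). if (i < n \<and> j = i) \<or> (n \<le> i \<and> j = i + n + m) then 1 else 0)"

(* L(H) = - h_uu^{-1} [h_ux, h_ur1, ..., h_urN]  (m x (N+1)n); L(H) = 0 if h_uu singular
   (in particular L(0) = 0). *)
definition gainL :: "nat \<Rightarrow> nat \<Rightarrow> nat \<Rightarrow> real mat \<Rightarrow> real mat" where
  "gainL n m N H =
    (let Su = sel m n (dimH n m N);
         huu = Su * H * transpose_mat Su;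
         hur = Su * H * colsel n m N
     in case mat_inverse huu of
          Some Hi \<Rightarrow> - (Hi * hur)
        | None \<Rightarrow> 0\<^sub>m m ((N + 1) * n))"

(* M(L): [x;u;r_0;...;r_N] \<mapsto> [Ax+Bu; L_x(Ax+Bu) + L_1 r_2 + ... + L_{N-1} r_N; r_1; ...; r_N; 0] *)
definition closedM :: "nat \<Rightarrow> nat \<Rightarrow> nat \<Rightarrow> real mat \<Rightarrow> real mat \<Rightarrow> real mat \<Rightarrow> real mat" where
  "closedM n m N A B L =
    (let d = dimH n m N;
         Px = sel n 0 d; Pu = sel m n d;
         xnext = A * Px + B * Pu;
         Lx = L * transpose_mat (sel n 0 ((N + 1) * n));
         Lr = L * transpose_mat (sel ((N - 1) * n) n ((N + 1) * n));
         Pr2N = sel ((N - 1) * n) (n + m + 2 * n) d;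
         Pr1N = sel (N * n) (n + m + n) d
     in transpose_mat Px * xnext
        + transpose_mat Pu * (Lx * xnext + Lr * Pr2N)
        + transpose_mat (sel (N * n) (n + m) d) * Pr1N)"

definition costG :: "nat \<Rightarrow> nat \<Rightarrow> nat \<Rightarrow> real mat \<Rightarrow> real mat \<Rightarrow> real mat" where
  "costG n m N Q R =
    (let d = dimH n m N; Px = sel n 0 d; Pu = sel m n d; Pr0 = sel n (n + m) d
     in transpose_mat (Px - Pr0) * Q * (Px - Pr0) + transpose_mat Pu * R * Pu)"

fun Hseq :: "nat \<Rightarrow> nat \<Rightarrow> nat \<Rightarrow> real mat \<Rightarrow> real mat \<Rightarrow> real mat \<Rightarrow> real mat \<Rightarrow> real \<Rightarrow> nat \<Rightarrow> real mat" where
  "Hseq n m N A B Q R \<gamma> 0 = 0\<^sub>m (dimH n m N) (dimH n m N)"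
| "Hseq n m N A B Q R \<gamma> (Suc i) =
    (let H = Hseq n m N A B Q R \<gamma> i; Mi = closedM n m N A B (gainL n m N H)
     in costG n m N Q R + \<gamma> \<cdot>\<^sub>m (transpose_mat Mi * H * Mi))"

end

theory Submission
  imports Defs
begin

(* Write z' H z for the quadratic form of H.  For i >= 1 the
   block h_uu of H(i) dominates R, so it is invertible, and h_ur0 = 0 because the closed loop
   never looks at r_0; completing the square then shows that the gain L(H(i)) chooses the next
   input optimally against H(i).  Unrolling the recursion, z' H(i) z is at most the discounted
   G-cost of any open-loop input sequence started from z.  Controllability supplies one that
   drives the state to 0 in n steps; after n + N + 1 steps state, input and shifted references
   all vanish, so that cost is z' Y z for one fixed Y, whence 0 <= H(i) <= Y. *)

lemma sel_carrier[simp]: "sel k off d \<in> carrier_mat k d"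
  by (simp add: sel_def)

lemma sel_dims[simp]: "dim_row (sel k off d) = k" "dim_col (sel k off d) = d"
  by (simp_all add: sel_def)

lemma sel_index[simp]: "i < k \<Longrightarrow> j < d \<Longrightarrow> sel k off d $$ (i, j) = (if j = off + i then 1 else 0)"
  by (simp add: sel_def)

lemma transpose_carrierI: "X \<in> carrier_mat nr nc \<Longrightarrow> X\<^sup>T \<in> carrier_mat nc nr"
  by simp

lemmas carrier_intros = mult_carrier_mat add_carrier_mat minus_carrier_mat smult_carrier_mat
  uminus_carrier_mat zero_carrier_mat one_carrier_mat sel_carrier transpose_carrierI
  mult_mat_vec_carrier add_carrier_vec zero_carrier_vec

lemma sel_mult:
  assumes "off + k \<le> d" "X \<in> carrier_mat d c"
  shows "sel k off d * X = mat k c (\<lambda>(i, j). X $$ (off + i, j))"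
proof (rule eq_matI)
  fix i j assume "i < dim_row (mat k c (\<lambda>(i, j). X $$ (off + i, j)))"
    "j < dim_col (mat k c (\<lambda>(i, j). X $$ (off + i, j)))"
  hence ij: "i < k" "j < c" by auto
  have "(sel k off d * X) $$ (i, j) = (\<Sum>t\<in>{0..<d}. (if t = off + i then 1 else 0) * X $$ (t, j))"
    using ij assms by (auto simp: scalar_prod_def intro!: sum.cong)
  also have "\<dots> = X $$ (off + i, j)"
    using ij assms by (simp add: if_distrib[of "\<lambda>x. x * _"] sum.delta' cong: if_cong)
  finally show "(sel k off d * X) $$ (i, j) = mat k c (\<lambda>(i, j). X $$ (off + i, j)) $$ (i, j)"
    using ij by simp
qed (use assms in auto)

lemma mult_sel:
  assumes "X \<in> carrier_mat r k"
  shows "X * sel k off d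
    = mat r d (\<lambda>(i, t). if off \<le> t \<and> t < off + k then X $$ (i, t - off) else 0)"
proof (rule eq_matI)
  fix i t assume
    "i < dim_row (mat r d (\<lambda>(i, t). if off \<le> t \<and> t < off + k then X $$ (i, t - off) else 0))"
     "t < dim_col (mat r d (\<lambda>(i, t). if off \<le> t \<and> t < off + k then X $$ (i, t - off) else 0))"
  hence it: "i < r" "t < d" by auto
  have "(X * sel k off d) $$ (i, t)
      = (\<Sum>j\<in>{0..<k}. X $$ (i, j) * (if j = t - off \<and> off \<le> t then 1 else 0))"
    using it assms by (auto simp: scalar_prod_def intro!: sum.cong)
  also have "\<dots> = (if off \<le> t \<and> t < off + k then X $$ (i, t - off) else 0)"
    by (cases "off \<le> t") (auto simp: if_distrib[of "\<lambda>x. _ * x"] sum.delta' cong: if_cong)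
  finally show "(X * sel k off d) $$ (i, t)
      = mat r d (\<lambda>(i, t). if off \<le> t \<and> t < off + k then X $$ (i, t - off) else 0) $$ (i, t)"
    using it by simp
qed (use assms in auto)

lemma selT_mult:
  assumes "X \<in> carrier_mat k c"
  shows "(sel k off d)\<^sup>T * X
    = mat d c (\<lambda>(t, j). if off \<le> t \<and> t < off + k then X $$ (t - off, j) else 0)"
proof -
  have "(sel k off d)\<^sup>T * X = (X\<^sup>T * sel k off d)\<^sup>T"
    using transpose_mult[of "X\<^sup>T" c k "sel k off d" d] assms by simp
  thus ?thesis unfolding mult_sel[OF transpose_carrierI[OF assms]] using assms
    by (auto intro!: eq_matI)
qed

lemma mult_selT:
  assumes "off + k \<le> d" "X \<in> carrier_mat r d"
  shows "X * (sel k off d)\<^sup>T = mat r k (\<lambda>(i, j). X $$ (i, off + j))"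
proof -
  have "X * (sel k off d)\<^sup>T = (sel k off d * X\<^sup>T)\<^sup>T"
    using transpose_mult[of "sel k off d" k d "X\<^sup>T" r] assms by simp
  thus ?thesis unfolding sel_mult[OF assms(1) transpose_carrierI[OF assms(2)]] using assms
    by (auto intro!: eq_matI)
qed

lemma sel_mult_selT:
  assumes "off1 + k1 \<le> d" "off2 + k2 \<le> d"
  shows "sel k1 off1 d * (sel k2 off2 d)\<^sup>T
    = mat k1 k2 (\<lambda>(i, j). if off1 + i = off2 + j then 1 else 0)"
  unfolding mult_selT[OF assms(2) sel_carrier] using assms by (intro eq_matI) auto

lemma sel_mult_selT_self:
  "off + k \<le> d \<Longrightarrow> sel k off d * (sel k off d)\<^sup>T = 1\<^sub>m k"
  by (subst sel_mult_selT) (auto intro!: eq_matI)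

lemma sel_mult_selT_disjoint:
  "off1 + k1 \<le> d \<Longrightarrow> off2 + k2 \<le> d \<Longrightarrow> off1 + k1 \<le> off2 \<or> off2 + k2 \<le> off1 \<Longrightarrow>
    sel k1 off1 d * (sel k2 off2 d)\<^sup>T = 0\<^sub>m k1 k2"
  by (subst sel_mult_selT) (auto intro!: eq_matI)

lemma smult_mat_mult_vec:
  fixes H :: "'a :: comm_ring mat"
  shows "H \<in> carrier_mat k d \<Longrightarrow> z \<in> carrier_vec d \<Longrightarrow> (c \<cdot>\<^sub>m H) *\<^sub>v z = c \<cdot>\<^sub>v (H *\<^sub>v z)"
  by (rule eq_vecI) (auto simp: carrier_vecD)

lemma zero_mat_mult_vec[simp]: "z \<in> carrier_vec d \<Longrightarrow> 0\<^sub>m k d *\<^sub>v z = 0\<^sub>v k"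
  by (rule eq_vecI) auto

definition qform :: "real mat \<Rightarrow> real vec \<Rightarrow> real" where
  "qform H z = z \<bullet> (H *\<^sub>v z)"

lemma psd_iff_qform:
  "psd d X \<longleftrightarrow> X \<in> carrier_mat d d \<and> X\<^sup>T = X \<and> (\<forall>v \<in> carrier_vec d. qform X v \<ge> 0)"
  by (simp add: psd_def qform_def)

lemma qform_zero_mat[simp]: "z \<in> carrier_vec d \<Longrightarrow> qform (0\<^sub>m d d) z = 0"
  by (simp add: qform_def)

lemma qform_zero_vec[simp]: "H \<in> carrier_mat d d \<Longrightarrow> qform H (0\<^sub>v d) = 0"
  unfolding qform_def by (rule scalar_prod_left_zero) auto

lemma qform_add:
  "H1 \<in> carrier_mat d d \<Longrightarrow> H2 \<in> carrier_mat d d \<Longrightarrow> z \<in> carrier_vec d \<Longrightarrow>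
    qform (H1 + H2) z = qform H1 z + qform H2 z"
  unfolding qform_def by (simp add: add_mult_distrib_mat_vec scalar_prod_add_distrib[of _ d])

lemma qform_diff:
  "H1 \<in> carrier_mat d d \<Longrightarrow> H2 \<in> carrier_mat d d \<Longrightarrow> z \<in> carrier_vec d \<Longrightarrow>
    qform (H1 - H2) z = qform H1 z - qform H2 z"
  unfolding qform_def by (simp add: minus_mult_distrib_mat_vec scalar_prod_minus_distrib[of _ d])

lemma qform_smult: "H \<in> carrier_mat d d \<Longrightarrow> z \<in> carrier_vec d \<Longrightarrow> qform (c \<cdot>\<^sub>m H) z = c * qform H z"
  unfolding qform_def by (simp add: smult_mat_mult_vec)

lemma transpose_smult_mat: "(c \<cdot>\<^sub>m X)\<^sup>T = c \<cdot>\<^sub>m X\<^sup>T"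
  by (rule eq_matI) auto

lemma mult_assoc4:
  assumes "X \<in> carrier_mat a b" "Y \<in> carrier_mat b c" "Z \<in> carrier_mat c e" "W \<in> carrier_mat e f"
  shows "X * (Y * Z * W) = X * Y * Z * W"
proof -
  have "X * (Y * Z * W) = X * (Y * Z) * W"
    using assoc_mult_mat[OF assms(1) mult_carrier_mat[OF assms(2,3)] assms(4)] by simp
  also have "X * (Y * Z) = X * Y * Z" using assoc_mult_mat[OF assms(1-3)] by simp
  finally show ?thesis .
qed

lemma mult_distrib_sum_of_products:
  assumes P: "P \<in> carrier_mat a b"
    and X: "X \<in> carrier_mat b c" "Y \<in> carrier_mat c e"
    and X': "X' \<in> carrier_mat b c'" "Y' \<in> carrier_mat c' e"
  shows "P * (X * Y + X' * Y') = P * X * Y + P * X' * Y'"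
  using assms
  by (simp add: mult_add_distrib_mat[OF P mult_carrier_mat[OF X] mult_carrier_mat[OF X']]
      assoc_mult_mat[OF P X] assoc_mult_mat[OF P X'])

lemma sum_of_products_mult_distrib:
  assumes X: "X \<in> carrier_mat a c" "Y \<in> carrier_mat c b"
    and X': "X' \<in> carrier_mat a c'" "Y' \<in> carrier_mat c' b"
    and P: "P \<in> carrier_mat b e"
  shows "(X * Y + X' * Y') * P = X * (Y * P) + X' * (Y' * P)"
  using assms
  by (simp add: add_mult_distrib_mat[OF mult_carrier_mat[OF X] mult_carrier_mat[OF X'] P]
      assoc_mult_mat[OF X P] assoc_mult_mat[OF X' P])

lemma symmetric_bilinear:
  fixes H :: "real mat"
  assumes H: "H \<in> carrier_mat d d" "H\<^sup>T = H" and x: "x \<in> carrier_vec d" and y: "y \<in> carrier_vec d"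
  shows "x \<bullet> (H *\<^sub>v y) = y \<bullet> (H *\<^sub>v x)"
proof -
  have "x \<bullet> (H *\<^sub>v y) = (H\<^sup>T *\<^sub>v x) \<bullet> y" by (rule transpose_vec_mult_scalar[OF H(1) y x, symmetric])
  also have "\<dots> = (H *\<^sub>v x) \<bullet> y" using H by simp
  also have "\<dots> = y \<bullet> (H *\<^sub>v x)" using H x y by (intro comm_scalar_prod[of _ d]) auto
  finally show ?thesis .
qed

lemma symmetric_congruence:
  fixes H :: "real mat"
  assumes H: "H \<in> carrier_mat d d" "H\<^sup>T = H" and P: "P \<in> carrier_mat k d"
  shows "(P * H * P\<^sup>T)\<^sup>T = P * H * P\<^sup>T"
proof -
  have "(P * H * P\<^sup>T)\<^sup>T = P * (P * H)\<^sup>T"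
    using H P by (subst transpose_mult[of _ k d]) auto
  also have "\<dots> = P * H * P\<^sup>T"
    using H P by (simp add: transpose_mult[OF P H(1)] assoc_mult_mat[of P k d H d _ k])
  finally show ?thesis .
qed

lemma symmetric_congruence_transpose:
  fixes S :: "real mat"
  assumes "S \<in> carrier_mat k k" "S\<^sup>T = S" and "P \<in> carrier_mat k d"
  shows "(P\<^sup>T * S * P)\<^sup>T = P\<^sup>T * S * P"
  using symmetric_congruence[OF assms(1,2), of "P\<^sup>T" d] assms(3) by simp

lemma qform_congruence:
  assumes P: "P \<in> carrier_mat k d" and S: "S \<in> carrier_mat k k" and z: "z \<in> carrier_vec d"
  shows "qform (P\<^sup>T * S * P) z = qform S (P *\<^sub>v z)"
proof -
  have "(P\<^sup>T * S * P) *\<^sub>v z = (P\<^sup>T * S) *\<^sub>v (P *\<^sub>v z)"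
    using P S z by (intro assoc_mult_mat_vec[of _ d k]) auto
  also have "\<dots> = P\<^sup>T *\<^sub>v (S *\<^sub>v (P *\<^sub>v z))"
    using P S z by (intro assoc_mult_mat_vec[of _ d k]) auto
  finally have "(P\<^sup>T * S * P) *\<^sub>v z = P\<^sup>T *\<^sub>v (S *\<^sub>v (P *\<^sub>v z))" .
  hence "qform (P\<^sup>T * S * P) z = z \<bullet> (P\<^sup>T *\<^sub>v (S *\<^sub>v (P *\<^sub>v z)))" by (simp add: qform_def)
  also have "\<dots> = (P\<^sup>T *\<^sub>v (S *\<^sub>v (P *\<^sub>v z))) \<bullet> z" using P S z
    by (intro comm_scalar_prod[of _ d]) auto
  also have "\<dots> = (S *\<^sub>v (P *\<^sub>v z)) \<bullet> (P *\<^sub>v z)" using P S z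
    by (intro transpose_vec_mult_scalar) auto
  also have "\<dots> = qform S (P *\<^sub>v z)" unfolding qform_def using P S z
    by (intro comm_scalar_prod[of _ k]) auto
  finally show ?thesis .
qed

lemma qform_add_transpose_image:
  assumes H: "H \<in> carrier_mat d d" "H\<^sup>T = H" and P: "P \<in> carrier_mat k d"
    and w: "w \<in> carrier_vec d" and x: "x \<in> carrier_vec k"
  shows "qform H (w + P\<^sup>T *\<^sub>v x) = qform H w + 2 * (x \<bullet> (P *\<^sub>v (H *\<^sub>v w))) + qform (P * H * P\<^sup>T) x"
proof -
  have Px: "P\<^sup>T *\<^sub>v x \<in> carrier_vec d" using P x by auto
  have cross: "(P\<^sup>T *\<^sub>v x) \<bullet> (H *\<^sub>v w) = x \<bullet> (P *\<^sub>v (H *\<^sub>v w))"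
    using P x H w by (intro transpose_vec_mult_scalar) auto
  have square: "(P\<^sup>T *\<^sub>v x) \<bullet> (H *\<^sub>v (P\<^sup>T *\<^sub>v x)) = qform (P * H * P\<^sup>T) x"
  proof -
    have "(P\<^sup>T *\<^sub>v x) \<bullet> (H *\<^sub>v (P\<^sup>T *\<^sub>v x)) = x \<bullet> (P *\<^sub>v (H *\<^sub>v (P\<^sup>T *\<^sub>v x)))"
      using P x H by (intro transpose_vec_mult_scalar) auto
    also have "P *\<^sub>v (H *\<^sub>v (P\<^sup>T *\<^sub>v x)) = (P * H * P\<^sup>T) *\<^sub>v x"
      using P H x by (simp add: assoc_mult_mat_vec[of _ k d _ k])
    finally show ?thesis by (simp add: qform_def)
  qed
  have "qform H (w + P\<^sup>T *\<^sub>v x)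
      = w \<bullet> (H *\<^sub>v w) + w \<bullet> (H *\<^sub>v (P\<^sup>T *\<^sub>v x))
        + ((P\<^sup>T *\<^sub>v x) \<bullet> (H *\<^sub>v w) + (P\<^sup>T *\<^sub>v x) \<bullet> (H *\<^sub>v (P\<^sup>T *\<^sub>v x)))"
    unfolding qform_def using H w Px
    by (simp add: mult_add_distrib_mat_vec add_scalar_prod_distrib[of _ d]
      scalar_prod_add_distrib[of _ d])
  thus ?thesis using cross square symmetric_bilinear[OF H w Px] by (simp add: qform_def)
qed

text \<open>Completing the square: the excess of \<open>qform H (w + P\<^sup>T u)\<close> over the value at
  \<open>u = - Hi P H w\<close> is \<open>qform (P H P\<^sup>T) (u + Hi P H w)\<close>.\<close>

lemma qform_completing_square:
  assumes H: "H \<in> carrier_mat d d" "H\<^sup>T = H" and P: "P \<in> carrier_mat k d"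
    and Hi: "Hi \<in> carrier_mat k k" "P * H * P\<^sup>T * Hi = 1\<^sub>m k"
    and psd: "\<And>v. v \<in> carrier_vec k \<Longrightarrow> qform (P * H * P\<^sup>T) v \<ge> 0"
    and w: "w \<in> carrier_vec d" and u: "u \<in> carrier_vec k"
  shows "qform H (w + P\<^sup>T *\<^sub>v (- (Hi *\<^sub>v (P *\<^sub>v (H *\<^sub>v w))))) \<le> qform H (w + P\<^sup>T *\<^sub>v u)"
proof -
  define b where "b = P *\<^sub>v (H *\<^sub>v w)"
  define c where "c = Hi *\<^sub>v b"
  define U where "U = P * H * P\<^sup>T"
  have b: "b \<in> carrier_vec k" using P H w by (simp add: b_def)
  have c: "c \<in> carrier_vec k" using Hi b by (simp add: c_def)
  have U: "U \<in> carrier_mat k k" "U\<^sup>T = U" using P H symmetric_congruence[OF H P]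
    by (auto simp: U_def)
  have Uc: "U *\<^sub>v c = b"
    unfolding c_def using Hi U b by (simp add: assoc_mult_mat_vec[symmetric, of _ k k _ k] U_def)
  have at_u: "qform H (w + P\<^sup>T *\<^sub>v u) = qform H w + 2 * (u \<bullet> b) + qform U u"
    unfolding b_def U_def by (rule qform_add_transpose_image[OF H P w u])
  have at_min: "qform H (w + P\<^sup>T *\<^sub>v (- c)) = qform H w - c \<bullet> b"
  proof -
    have "U *\<^sub>v (- c) = - b" using U c Uc by (intro eq_vecI) (auto simp: scalar_prod_uminus_right)
    hence "qform U (- c) = c \<bullet> b" unfolding qform_def using c b by simp
    moreover have "(- c) \<bullet> b = - (c \<bullet> b)" using c b by simp
    moreover have "qform H (w + P\<^sup>T *\<^sub>v (- c)) = qform H w + 2 * ((- c) \<bullet> b) + qform U (- c)"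
      unfolding b_def U_def by (rule qform_add_transpose_image[OF H P w]) (use c in auto)
    ultimately show ?thesis by simp
  qed
  have "qform U (u + c) = qform U u + 2 * (u \<bullet> b) + c \<bullet> b"
  proof -
    have "qform U (u + c) = u \<bullet> (U *\<^sub>v u) + u \<bullet> b + (c \<bullet> (U *\<^sub>v u) + c \<bullet> b)"
      unfolding qform_def using U u c b Uc
      by (simp add: mult_add_distrib_mat_vec add_scalar_prod_distrib[of _ k]
        scalar_prod_add_distrib[of _ k])
    also have "c \<bullet> (U *\<^sub>v u) = u \<bullet> b" using symmetric_bilinear[OF U c u] Uc by simp
    finally show ?thesis by (simp add: qform_def)
  qed
  moreover have "qform U (u + c) \<ge> 0" using psd u c unfolding U_def by auto
  ultimately show ?thesis unfolding b_def[symmetric] c_def[symmetric] using at_u at_min by simp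
qed

lemma (in vec_space) full_rank_span:
  assumes C: "C \<in> carrier_mat n nc" and r: "rank C = n"
  shows "carrier_vec n \<subseteq> span (set (cols C))"
proof -
  let ?S = "set (cols C)"
  have SV: "?S \<subseteq> carrier_vec n" using C cols_dim by blast
  have vs: "vectorspace class_ring (span_vs ?S)"
    using field.field_axioms span_is_submodule[OF SV] submodule_is_module vectorspace_def by auto
  have fd: "vectorspace.fin_dim class_ring (span_vs ?S)" using fin_dim_span_cols[OF C] by simp
  obtain b where b: "finite b" "vectorspace.basis class_ring (span_vs ?S) b"
    using vectorspace.finite_basis_exists[OF vs fd] by blast
  have cb: "card b = n" using vectorspace.dim_basis[OF vs b] r unfolding rank_def by simp
  have bsub: "b \<subseteq> span ?S" using b(2) unfolding vectorspace.basis_def[OF vs] by simp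
  have "module.lin_indpt class_ring (span_vs ?S) b" using b(2)
    unfolding vectorspace.basis_def[OF vs] by simp
  hence li: "lin_indpt b" using span_li_not_depend(2)[OF bsub span_is_submodule[OF SV]] by simp
  have bV: "b \<subseteq> carrier_vec n" using bsub span_is_subset2[OF SV] by auto
  have "basis b" by (rule dim_li_is_basis[OF fin_dim b(1)]) (use bV li cb dim_is_n in auto)
  hence "span b = carrier_vec n" unfolding basis_def by simp
  moreover have "span b \<subseteq> span ?S" by (rule span_is_subset[OF bsub span_is_submodule[OF SV]])
  ultimately show ?thesis by simp
qed

lemma full_rank_right_inverse:
  fixes C :: "real mat"
  assumes C: "C \<in> carrier_mat n k" and r: "vec_space.rank n C = n"
  obtains W where "W \<in> carrier_mat k n" "C * W = 1\<^sub>m n"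
proof -
  have "\<exists>x. x \<in> carrier_vec k \<and> C *\<^sub>v x = unit_vec n i" if i: "i < n" for i
  proof -
    have "unit_vec n i \<in> vec_space.col_space n C"
      using vec_space.full_rank_span[OF C r] i by (auto simp: vec_space.col_space_def)
    thus ?thesis using vec_space.col_space_eq[OF C] C by auto
  qed
  then obtain x where x: "\<And>i. i < n \<Longrightarrow> x i \<in> carrier_vec k \<and> C *\<^sub>v x i = unit_vec n i"
    by metis
  define W where "W = mat k n (\<lambda>(r, c). x c $ r)"
  have W: "W \<in> carrier_mat k n" unfolding W_def by simp
  have "C * W = 1\<^sub>m n"
  proof (rule eq_matI)
    fix i c assume "i < dim_row (1\<^sub>m n :: real mat)" "c < dim_col (1\<^sub>m n :: real mat)"
    hence ic: "i < n" "c < n" by auto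
    have "col W c = x c" unfolding W_def using ic x[OF ic(2)] by (auto intro!: eq_vecI)
    hence "(C * W) $$ (i, c) = (C *\<^sub>v x c) $ i" using C W ic by simp
    thus "(C * W) $$ (i, c) = (1\<^sub>m n :: real mat) $$ (i, c)" using x[OF ic(2)] ic by simp
  qed (use C W in auto)
  thus ?thesis using W that by blast
qed

lemma mult_pow_mat_Suc:
  assumes A: "A \<in> carrier_mat n n"
  shows "A * A ^\<^sub>m k = A ^\<^sub>m Suc k"
proof (induction k)
  case (Suc k)
  have "A * A ^\<^sub>m Suc k = (A * A ^\<^sub>m k) * A"
    using A by (simp add: assoc_mult_mat[of _ n n _ n _ n])
  thus ?case using Suc by simp
qed (use A in simp)

lemma block_index_iff:
  assumes r: "(r::nat) < m"
  shows "q * m \<le> l * m + r \<and> l * m + r < q * m + m \<longleftrightarrow> l = q"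
proof (cases l q rule: linorder_cases)
  case less
  hence "Suc l * m \<le> q * m" by (intro mult_le_mono1) simp
  thus ?thesis using less r by simp
next
  case greater
  hence "Suc q * m \<le> l * m" by (intro mult_le_mono1) simp
  thus ?thesis using greater by simp
qed (use r in simp)

declare Hseq.simps(2)[simp del]

locale lqt =
  fixes n m N :: nat and A B Q R :: "real mat" and \<gamma> :: real
  assumes A: "A \<in> carrier_mat n n" and B: "B \<in> carrier_mat n m"
    and Q_psd: "psd n Q" and R_pd: "pd m R" and \<gamma>_nonneg: "0 \<le> \<gamma>" and \<gamma>_less_1: "\<gamma> < 1"
begin

abbreviation "D \<equiv> dimH n m N"
abbreviation "Px \<equiv> sel n 0 D"
abbreviation "Pu \<equiv> sel m n D"
abbreviation "Pr k \<equiv> sel n (n + m + k * n) D"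
abbreviation "Pr0 \<equiv> sel n (n + m) D"

definition "x_next = A * Px + B * Pu"

text \<open>\<open>next_xr\<close> maps \<open>[x; u; r\<^sub>0; \<dots>; r\<^sub>N]\<close> to \<open>[A x + B u; r\<^sub>2; \<dots>; r\<^sub>N; 0]\<close>, the successor
  state and shifted references on which the gain acts in \<^const>\<open>closedM\<close>.\<close>

definition "next_xr = (sel n 0 ((N + 1) * n))\<^sup>T * x_next
  + (sel ((N - 1) * n) n ((N + 1) * n))\<^sup>T * sel ((N - 1) * n) (n + m + 2 * n) D"

definition "M_open = closedM n m N A B (0\<^sub>m m ((N + 1) * n))"

lemma D_eq: "D = (N + 2) * n + m"
  by (simp add: dimH_def)

lemma x_next_carrier[simp]: "x_next \<in> carrier_mat n D"
  using A B by (simp add: x_next_def)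

lemma x_next_index:
  "a < n \<Longrightarrow> j < D \<Longrightarrow> x_next $$ (a, j) =
    (if j < n then A $$ (a, j) else 0) + (if n \<le> j \<and> j < n + m then B $$ (a, j - n) else 0)"
  unfolding x_next_def mult_sel[OF A] mult_sel[OF B] by simp

lemma x_next_dims[simp]: "dim_row x_next = n" "dim_col x_next = D"
  using carrier_matD[OF x_next_carrier] by auto

lemma next_xr_carrier[simp]: "next_xr \<in> carrier_mat (n + N * n) D"
  unfolding next_xr_def by (intro add_carrier_mat mult_carrier_mat) auto

lemma next_xr_dims[simp]: "dim_row next_xr = n + N * n" "dim_col next_xr = D"
  using carrier_matD[OF next_xr_carrier] by auto

lemma next_xr_index:
  assumes "i < n + N * n" and "j < D"
  shows "next_xr $$ (i, j) = (if i < n then x_next $$ (i, j) else 0)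
    + (if n \<le> i \<and> i < n + (N - 1) * n \<and> j = n + m + 2 * n + (i - n) then 1 else 0)"
  unfolding next_xr_def selT_mult[OF x_next_carrier] selT_mult[OF sel_carrier] using assms by auto

lemma next_xr_Pr0_col:
  assumes "i < n + N * n" and "c < n"
  shows "next_xr $$ (i, n + m + c) = 0"
  using assms by (simp add: next_xr_index x_next_index D_eq)

lemma closedM_eq:
  assumes L: "L \<in> carrier_mat m (n + N * n)"
  shows "closedM n m N A B L = Px\<^sup>T * x_next + Pu\<^sup>T * (L * next_xr)
    + (sel (N * n) (n + m) D)\<^sup>T * sel (N * n) (n + m + n) D"
proof -
  let ?S0 = "sel n 0 ((N + 1) * n)" and ?S1 = "sel ((N - 1) * n) n ((N + 1) * n)"
    and ?R2 = "sel ((N - 1) * n) (n + m + 2 * n) D"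
  have "L * ?S0\<^sup>T * x_next = L * (?S0\<^sup>T * x_next)"
    by (rule assoc_mult_mat[OF L, of _ n _ D]) simp_all
  moreover have "L * ?S1\<^sup>T * ?R2 = L * (?S1\<^sup>T * ?R2)"
    by (rule assoc_mult_mat[OF L, of _ "(N - 1) * n" _ D]) simp_all
  ultimately have "L * ?S0\<^sup>T * x_next + L * ?S1\<^sup>T * ?R2 = L * (?S0\<^sup>T * x_next) + L * (?S1\<^sup>T * ?R2)"
    by simp
  also have "\<dots> = L * next_xr"
    unfolding next_xr_def using L
    by (intro mult_add_distrib_mat[symmetric, of _ _ _ _ D] mult_carrier_mat) auto
  finally show ?thesis unfolding closedM_def Let_def x_next_def by simp
qed

lemma closedM_carrier[simp]:
  "L \<in> carrier_mat m (n + N * n) \<Longrightarrow> closedM n m N A B L \<in> carrier_mat D D"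
  unfolding closedM_eq by (intro add_carrier_mat mult_carrier_mat) auto

lemma closedM_dims[simp]:
  "L \<in> carrier_mat m (n + N * n) \<Longrightarrow> dim_row (closedM n m N A B L) = D"
  "L \<in> carrier_mat m (n + N * n) \<Longrightarrow> dim_col (closedM n m N A B L) = D"
  using carrier_matD[OF closedM_carrier] by auto

lemma closedM_index:
  assumes L: "L \<in> carrier_mat m (n + N * n)" and ij: "i < D" "j < D"
  shows "closedM n m N A B L $$ (i, j) = (if i < n then x_next $$ (i, j) else 0)
    + (if n \<le> i \<and> i < n + m then (L * next_xr) $$ (i - n, j) else 0)
    + (if n + m \<le> i \<and> i < n + m + N * n \<and> j = i + n then 1 else 0)"
proof -
  have "L * next_xr \<in> carrier_mat m D" using L by simp
  moreover have "(sel (N * n) (n + m) D)\<^sup>T * sel (N * n) (n + m + n) D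
      = mat D D (\<lambda>(t, j). if n + m \<le> t \<and> t < n + m + N * n \<and> j = t + n then 1 else 0)"
    unfolding selT_mult[OF sel_carrier] by (rule eq_matI) auto
  ultimately show ?thesis
    unfolding closedM_eq[OF L] selT_mult[OF x_next_carrier] selT_mult[OF \<open>L * next_xr \<in> _\<close>]
    using ij by (simp only: index_add_mat dim_row_mat dim_col_mat index_mat split: prod.splits) simp
qed

lemma M_open_carrier[simp]: "M_open \<in> carrier_mat D D"
  unfolding M_open_def by simp

lemma M_open_dims[simp]: "dim_row M_open = D" "dim_col M_open = D"
  using carrier_matD[OF M_open_carrier] by auto

lemma M_open_index:
  assumes "i < D" "j < D"
  shows "M_open $$ (i, j) = (if i < n then x_next $$ (i, j) else 0)
    + (if n + m \<le> i \<and> i < n + m + N * n \<and> j = i + n then 1 else 0)"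
proof -
  have "0\<^sub>m m (n + N * n) * next_xr = 0\<^sub>m m D" by (rule left_mult_zero_mat) simp
  thus ?thesis using assms unfolding M_open_def by (auto simp: closedM_index)
qed

lemma closedM_split:
  assumes L: "L \<in> carrier_mat m (n + N * n)"
  shows "closedM n m N A B L = M_open + Pu\<^sup>T * (L * next_xr)"
proof -
  have "L * next_xr \<in> carrier_mat m D" using L by simp
  thus ?thesis unfolding selT_mult[OF \<open>L * next_xr \<in> carrier_mat m D\<close>]
    by (intro eq_matI) (use L in \<open>auto simp: closedM_index M_open_index\<close>)
qed

lemma Px_M_open: "Px * M_open = x_next"
  by (subst sel_mult[OF _ M_open_carrier]) (auto simp: D_eq M_open_index intro!: eq_matI)

lemma Pu_M_open: "Pu * M_open = 0\<^sub>m m D"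
  by (subst sel_mult[OF _ M_open_carrier]) (auto simp: D_eq M_open_index intro!: eq_matI)

lemma Pr_M_open:
  assumes "k \<le> N"
  shows "Pr k * M_open = (if k < N then Pr (Suc k) else 0\<^sub>m n D)"
proof -
  have "k * n + n \<le> N * n + n" using assms by simp
  hence fits: "n + m + k * n + n \<le> D" by (simp add: D_eq)
  have "k * n + n \<le> N * n" if "k < N"
    using mult_le_mono1[OF Suc_leI[OF that], of n] by simp
  with fits assms show ?thesis
    by (subst sel_mult[OF _ M_open_carrier]) (auto simp: M_open_index intro!: eq_matI)
qed

lemma closedM_Pr0T:
  assumes L: "L \<in> carrier_mat m (n + N * n)"
  shows "closedM n m N A B L * Pr0\<^sup>T = 0\<^sub>m D n"
proof -
  have "(L * next_xr) $$ (a, n + m + c) = 0" if "a < m" "c < n" for a c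
  proof -
    have "col next_xr (n + m + c) = 0\<^sub>v (n + N * n)"
      using that next_xr_Pr0_col by (intro eq_vecI) (auto simp: D_eq)
    thus ?thesis using L that by (simp add: D_eq)
  qed
  thus ?thesis
    by (subst mult_selT[OF _ closedM_carrier[OF L]])
      (auto simp: D_eq closedM_index[OF L] x_next_index intro!: eq_matI)
qed

lemma Px_mult_PuT: "Px * Pu\<^sup>T = 0\<^sub>m n m"
  by (rule sel_mult_selT_disjoint) (simp_all add: D_eq)

lemma Pu_mult_Pr0T: "Pu * Pr0\<^sup>T = 0\<^sub>m m n"
  by (rule sel_mult_selT_disjoint) (simp_all add: D_eq)

lemma Pr_mult_PuT: "k \<le> N \<Longrightarrow> Pr k * Pu\<^sup>T = 0\<^sub>m n m"
  by (rule sel_mult_selT_disjoint) (simp_all add: D_eq)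

lemma Pu_mult_PuT: "Pu * Pu\<^sup>T = 1\<^sub>m m"
  by (rule sel_mult_selT_self) (simp add: D_eq)

lemma colsel_carrier[simp]: "colsel n m N \<in> carrier_mat D (n + N * n)"
  by (simp add: colsel_def)

lemma colsel_dims[simp]: "dim_row (colsel n m N) = D" "dim_col (colsel n m N) = n + N * n"
  using carrier_matD[OF colsel_carrier] by auto

lemma colsel_index:
  "t < D \<Longrightarrow> i < n + N * n \<Longrightarrow> colsel n m N $$ (t, i) =
    (if (t < n \<or> n + m + n \<le> t) \<and> i = (if t < n then t else t - n - m) then 1 else 0)"
  by (auto simp: colsel_def)

lemma colsel_mult:
  assumes X: "X \<in> carrier_mat (n + N * n) c"
  shows "colsel n m N * X
    = mat D c (\<lambda>(t, j). if t < n then X $$ (t, j) else if n + m + n \<le> t then X $$ (t - n - m, j)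
      else 0)"
    (is "_ = mat D c ?f")
proof (rule eq_matI)
  fix t j assume "t < dim_row (mat D c ?f)" "j < dim_col (mat D c ?f)"
  hence tj: "t < D" "j < c" by auto
  let ?i = "if t < n then t else t - n - m"
  have i: "?i < n + N * n" if "t < n \<or> n + m + n \<le> t" using tj that by (auto simp: D_eq)
  have "(colsel n m N * X) $$ (t, j) = (\<Sum>i\<in>{0..<n + N * n}. colsel n m N $$ (t, i) * X $$ (i, j))"
    using tj X by (simp add: scalar_prod_def)
  also have "\<dots> = (\<Sum>i\<in>{0..<n + N * n}.
      if i = ?i then (if t < n \<or> n + m + n \<le> t then X $$ (i, j) else 0) else 0)"
    using tj by (intro sum.cong refl) (auto simp: colsel_index)
  also have "\<dots> = ?f (t, j)"
    using i by (cases "t < n"; cases "n + m + n \<le> t") (simp_all add: sum.delta)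
  finally show "(colsel n m N * X) $$ (t, j) = mat D c ?f $$ (t, j)"
    using tj by simp
qed (use X in \<open>auto simp: colsel_def\<close>)

text \<open>\<^const>\<open>colsel\<close> puts \<open>next_xr\<close> back into the rows \<open>x, r\<^sub>1, \<dots>, r\<^sub>N\<close>; as the
  \<open>u\<close>-row of \<open>M_open\<close> vanishes, only its \<open>r\<^sub>0\<close>-row is missing.\<close>

lemma colsel_next_xr: "colsel n m N * next_xr = M_open - Pr0\<^sup>T * (Pr0 * M_open)"
proof (rule eq_matI)
  fix t j
  assume "t < dim_row (M_open - Pr0\<^sup>T * (Pr0 * M_open))"
    "j < dim_col (M_open - Pr0\<^sup>T * (Pr0 * M_open))"
  hence tj: "t < D" "j < D" by auto
  have "Pr0 * M_open = mat n D (\<lambda>(i, j). M_open $$ (n + m + i, j))"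
    by (rule sel_mult[OF _ M_open_carrier]) (simp add: D_eq)
  hence "Pr0\<^sup>T * (Pr0 * M_open)
      = mat D D (\<lambda>(t, j). if n + m \<le> t \<and> t < n + m + n then M_open $$ (t, j) else 0)"
    by (auto simp: selT_mult[of _ n D] intro!: eq_matI)
  moreover have "t - n - m < n + (N - 1) * n \<longleftrightarrow> t < n + m + N * n" if "n + m + n \<le> t"
    using that by (cases N) auto
  ultimately show "(colsel n m N * next_xr) $$ (t, j) = (M_open - Pr0\<^sup>T * (Pr0 * M_open)) $$ (t, j)"
    using tj by (auto simp: colsel_mult[OF next_xr_carrier] next_xr_index M_open_index D_eq)
qed auto

lemma gainL_carrier:
  assumes X: "X \<in> carrier_mat D D"
  shows "gainL n m N X \<in> carrier_mat m (n + N * n)"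
proof (cases "mat_inverse (Pu * X * Pu\<^sup>T)")
  case (Some Hi)
  have "Pu * X * Pu\<^sup>T \<in> carrier_mat m m" by (rule carrier_intros X)+
  hence "Hi \<in> carrier_mat m m" using mat_inverse(2)[OF _ Some] by auto
  have "- (Hi * (Pu * X * colsel n m N)) \<in> carrier_mat m (n + N * n)"
    by (rule carrier_intros colsel_carrier X \<open>Hi \<in> carrier_mat m m\<close>)+
  thus ?thesis using Some unfolding gainL_def Let_def by simp
qed (simp add: gainL_def Let_def)

lemma gainL_mult_next_xr:
  assumes X: "X \<in> carrier_mat D D" and uncoupled: "Pu * X * Pr0\<^sup>T = 0\<^sub>m m n"
    and Hi: "mat_inverse (Pu * X * Pu\<^sup>T) = Some Hi"
  shows "gainL n m N X * next_xr = - (Hi * (Pu * X * M_open))"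
proof -
  have "Pu * X * Pu\<^sup>T \<in> carrier_mat m m" by (rule carrier_intros X)+
  hence Hi_carrier: "Hi \<in> carrier_mat m m" using mat_inverse(2)[OF _ Hi] by auto
  have PX: "Pu * X \<in> carrier_mat m D" and PXC: "Pu * X * colsel n m N \<in> carrier_mat m (n + N * n)"
    by (rule carrier_intros colsel_carrier X)+
  have "gainL n m N X * next_xr = - (Hi * (Pu * X * colsel n m N)) * next_xr"
    using Hi unfolding gainL_def Let_def by simp
  also have "\<dots> = - (Hi * (Pu * X * colsel n m N) * next_xr)"
    by simp
  also have "Hi * (Pu * X * colsel n m N) * next_xr = Hi * ((Pu * X) * (colsel n m N * next_xr))"
    by (simp add: assoc_mult_mat[OF Hi_carrier PXC next_xr_carrier]
        assoc_mult_mat[OF PX colsel_carrier next_xr_carrier])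
  also have
    "(Pu * X) * (colsel n m N * next_xr) = Pu * X * M_open - (Pu * X * Pr0\<^sup>T) * (Pr0 * M_open)"
  proof -
    have c1: "Pr0\<^sup>T \<in> carrier_mat D n" and c2: "Pr0 * M_open \<in> carrier_mat n D"
      by (rule carrier_intros M_open_carrier)+
    show ?thesis unfolding colsel_next_xr
      by (simp add: mult_minus_distrib_mat[OF PX M_open_carrier mult_carrier_mat[OF c1 c2]]
          assoc_mult_mat[OF PX c1 c2])
  qed
  also have "\<dots> = Pu * X * M_open"
    unfolding uncoupled using PX by (intro eq_matI) auto
  finally show ?thesis .
qed

lemma Q_carrier: "Q \<in> carrier_mat n n" and Q_sym: "Q\<^sup>T = Q"
  using Q_psd by (simp_all add: psd_def)

lemma R_carrier: "R \<in> carrier_mat m m" and R_sym: "R\<^sup>T = R"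
  using R_pd by (simp_all add: pd_def)

lemma qform_Q_nonneg: "v \<in> carrier_vec n \<Longrightarrow> qform Q v \<ge> 0"
  using Q_psd by (simp add: psd_iff_qform)

lemma qform_R_pos: "v \<in> carrier_vec m \<Longrightarrow> v \<noteq> 0\<^sub>v m \<Longrightarrow> qform R v > 0"
  using R_pd by (simp add: pd_def qform_def)

lemma qform_R_nonneg: "v \<in> carrier_vec m \<Longrightarrow> qform R v \<ge> 0"
  using qform_R_pos[of v] R_carrier by (cases "v = 0\<^sub>v m") auto

abbreviation "G \<equiv> costG n m N Q R"
abbreviation "Perr \<equiv> Px - Pr0"

lemma Perr_carrier[simp]: "Perr \<in> carrier_mat n D"
  by (rule carrier_intros)+

lemma G_eq: "G = Perr\<^sup>T * Q * Perr + Pu\<^sup>T * R * Pu"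
  unfolding costG_def Let_def ..

lemma G_carrier[simp]: "G \<in> carrier_mat D D"
  unfolding G_eq by (rule carrier_intros Q_carrier R_carrier Perr_carrier)+

lemma G_sym: "G\<^sup>T = G"
proof -
  have "G\<^sup>T = (Perr\<^sup>T * Q * Perr)\<^sup>T + (Pu\<^sup>T * R * Pu)\<^sup>T"
    unfolding G_eq by (rule transpose_add carrier_intros Q_carrier R_carrier Perr_carrier)+
  thus ?thesis unfolding G_eq
    by (simp add: symmetric_congruence_transpose[OF Q_carrier Q_sym Perr_carrier]
        symmetric_congruence_transpose[OF R_carrier R_sym sel_carrier])
qed

lemma qform_G:
  assumes z: "z \<in> carrier_vec D"
  shows "qform G z = qform Q (Perr *\<^sub>v z) + qform R (Pu *\<^sub>v z)"
proof -
  have "qform G z = qform (Perr\<^sup>T * Q * Perr) z + qform (Pu\<^sup>T * R * Pu) z"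
    unfolding G_eq by (rule qform_add carrier_intros Q_carrier R_carrier Perr_carrier z)+
  thus ?thesis
    by (simp add: qform_congruence[OF Perr_carrier Q_carrier z]
      qform_congruence[OF sel_carrier R_carrier z])
qed

lemma qform_G_nonneg:
  assumes z: "z \<in> carrier_vec D"
  shows "qform G z \<ge> 0"
proof -
  have "Perr *\<^sub>v z \<in> carrier_vec n" "Pu *\<^sub>v z \<in> carrier_vec m"
    by (rule carrier_intros Perr_carrier z)+
  thus ?thesis using qform_G[OF z] qform_Q_nonneg qform_R_nonneg by (simp add: add_nonneg_nonneg)
qed

lemma Perr_mult_PuT: "Perr * Pu\<^sup>T = 0\<^sub>m n m"
proof -
  have "Perr * Pu\<^sup>T = Px * Pu\<^sup>T - Pr0 * Pu\<^sup>T" by (rule minus_mult_distrib_mat) auto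
  also have "Pr0 * Pu\<^sup>T = 0\<^sub>m n m" by (rule sel_mult_selT_disjoint) (simp_all add: D_eq)
  finally show ?thesis unfolding Px_mult_PuT by (intro eq_matI) auto
qed

lemma Pu_mult_PerrT: "Pu * Perr\<^sup>T = 0\<^sub>m m n"
proof -
  have "Pu * Perr\<^sup>T = (Perr * Pu\<^sup>T)\<^sup>T" by (subst transpose_mult[of _ n D]) auto
  thus ?thesis unfolding Perr_mult_PuT by simp
qed

lemma qform_G_PuT:
  assumes v: "v \<in> carrier_vec m"
  shows "qform G (Pu\<^sup>T *\<^sub>v v) = qform R v"
proof -
  have z: "Pu\<^sup>T *\<^sub>v v \<in> carrier_vec D" by (rule carrier_intros v)+
  have "Perr *\<^sub>v (Pu\<^sup>T *\<^sub>v v) = (Perr * Pu\<^sup>T) *\<^sub>v v"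
    by (rule assoc_mult_mat_vec[symmetric]) (rule carrier_intros v)+
  hence "Perr *\<^sub>v (Pu\<^sup>T *\<^sub>v v) = 0\<^sub>v n" using v by (simp add: Perr_mult_PuT)
  moreover have "Pu *\<^sub>v (Pu\<^sup>T *\<^sub>v v) = (Pu * Pu\<^sup>T) *\<^sub>v v"
    by (rule assoc_mult_mat_vec[symmetric]) (rule carrier_intros v)+
  hence "Pu *\<^sub>v (Pu\<^sup>T *\<^sub>v v) = v" using v by (simp add: Pu_mult_PuT)
  ultimately show ?thesis unfolding qform_G[OF z] using Q_carrier by simp
qed

lemma Pu_G_Pr0T: "Pu * G * Pr0\<^sup>T = 0\<^sub>m m n"
proof -
  note carriers = Q_carrier R_carrier Perr_carrier
  have "Pu * G = Pu * (Perr\<^sup>T * Q * Perr) + Pu * (Pu\<^sup>T * R * Pu)"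
    unfolding G_eq by (rule mult_add_distrib_mat carrier_intros carriers)+
  also have "Pu * (Perr\<^sup>T * Q * Perr) = (Pu * Perr\<^sup>T) * Q * Perr"
    by (rule mult_assoc4) (rule carrier_intros carriers)+
  also have "Pu * (Pu\<^sup>T * R * Pu) = (Pu * Pu\<^sup>T) * R * Pu"
    by (rule mult_assoc4) (rule carrier_intros carriers)+
  finally have "Pu * G = R * Pu"
    unfolding Pu_mult_PerrT Pu_mult_PuT using carriers by simp
  hence "Pu * G * Pr0\<^sup>T = R * (Pu * Pr0\<^sup>T)"
    using assoc_mult_mat[OF R_carrier sel_carrier transpose_carrierI[OF sel_carrier]] by simp
  thus ?thesis unfolding Pu_mult_Pr0T using R_carrier by simp
qed

abbreviation "H i \<equiv> Hseq n m N A B Q R \<gamma> i"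
abbreviation "Mcl i \<equiv> closedM n m N A B (gainL n m N (H i))"

lemma H_Suc: "H (Suc i) = G + \<gamma> \<cdot>\<^sub>m ((Mcl i)\<^sup>T * H i * Mcl i)"
  by (simp add: Hseq.simps(2) Let_def)

lemma H_carrier: "H i \<in> carrier_mat D D"
proof (induction i)
  case (Suc i)
  have M: "Mcl i \<in> carrier_mat D D" using closedM_carrier[OF gainL_carrier[OF Suc]] .
  show ?case unfolding H_Suc by (rule carrier_intros G_carrier M Suc)+
qed simp

lemma Mcl_carrier: "Mcl i \<in> carrier_mat D D"
  using closedM_carrier[OF gainL_carrier[OF H_carrier]] .

lemmas iterate_carriers = G_carrier H_carrier Mcl_carrier

lemma H_sym: "(H i)\<^sup>T = H i"
proof (induction i)
  case (Suc i)
  have "(H (Suc i))\<^sup>T = G\<^sup>T + (\<gamma> \<cdot>\<^sub>m ((Mcl i)\<^sup>T * H i * Mcl i))\<^sup>T"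
    unfolding H_Suc by (rule transpose_add) (rule carrier_intros iterate_carriers)+
  also have "(\<gamma> \<cdot>\<^sub>m ((Mcl i)\<^sup>T * H i * Mcl i))\<^sup>T = \<gamma> \<cdot>\<^sub>m ((Mcl i)\<^sup>T * H i * Mcl i)"
    unfolding transpose_smult_mat
    using symmetric_congruence_transpose[OF H_carrier Suc Mcl_carrier] by simp
  finally show ?case unfolding G_sym H_Suc[symmetric] .
qed (auto intro!: eq_matI)

lemma qform_H_Suc:
  assumes z: "z \<in> carrier_vec D"
  shows "qform (H (Suc i)) z = qform G z + \<gamma> * qform (H i) (Mcl i *\<^sub>v z)"
proof -
  have "qform (H (Suc i)) z = qform G z + qform (\<gamma> \<cdot>\<^sub>m ((Mcl i)\<^sup>T * H i * Mcl i)) z"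
    unfolding H_Suc by (rule qform_add) (rule carrier_intros iterate_carriers z)+
  also have "qform (\<gamma> \<cdot>\<^sub>m ((Mcl i)\<^sup>T * H i * Mcl i)) z = \<gamma> * qform ((Mcl i)\<^sup>T * H i * Mcl i) z"
    by (rule qform_smult) (rule carrier_intros iterate_carriers z)+
  finally show ?thesis by (simp add: qform_congruence[OF Mcl_carrier H_carrier z])
qed

lemma qform_H_nonneg: "z \<in> carrier_vec D \<Longrightarrow> qform (H i) z \<ge> 0"
proof (induction i arbitrary: z)
  case (Suc i)
  have "Mcl i *\<^sub>v z \<in> carrier_vec D" by (rule carrier_intros Mcl_carrier Suc.prems)+
  hence "qform (H i) (Mcl i *\<^sub>v z) \<ge> 0" by (rule Suc.IH)
  thus ?case unfolding qform_H_Suc[OF Suc.prems] using qform_G_nonneg[OF Suc.prems] \<gamma>_nonneg by simp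
qed simp

lemma H_psd: "psd D (H i)"
  unfolding psd_iff_qform using H_carrier H_sym qform_H_nonneg by blast

lemma H_Suc_Pr0T: "H (Suc i) * Pr0\<^sup>T = G * Pr0\<^sup>T"
proof -
  have closed_loop: "Mcl i * Pr0\<^sup>T = 0\<^sub>m D n" by (rule closedM_Pr0T[OF gainL_carrier[OF H_carrier]])
  have "H (Suc i) * Pr0\<^sup>T = G * Pr0\<^sup>T + (\<gamma> \<cdot>\<^sub>m ((Mcl i)\<^sup>T * H i * Mcl i)) * Pr0\<^sup>T"
    unfolding H_Suc by (rule add_mult_distrib_mat) (rule carrier_intros iterate_carriers)+
  also have "(\<gamma> \<cdot>\<^sub>m ((Mcl i)\<^sup>T * H i * Mcl i)) * Pr0\<^sup>T = \<gamma> \<cdot>\<^sub>m (((Mcl i)\<^sup>T * H i * Mcl i) * Pr0\<^sup>T)"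
    by (rule mult_smult_assoc_mat) (rule carrier_intros iterate_carriers)+
  also have "((Mcl i)\<^sup>T * H i * Mcl i) * Pr0\<^sup>T = ((Mcl i)\<^sup>T * H i) * (Mcl i * Pr0\<^sup>T)"
    by (rule assoc_mult_mat) (rule carrier_intros iterate_carriers)+
  also have "\<dots> = 0\<^sub>m D n"
    unfolding closed_loop by (rule right_mult_zero_mat) (rule carrier_intros iterate_carriers)+
  finally show ?thesis using G_carrier by (simp add: right_add_zero_mat[of _ D n])
qed

text \<open>The closed loop ignores \<open>r\<^sub>0\<close>, so after the first step \<open>u\<close> and \<open>r\<^sub>0\<close> are coupled only
  through \<open>G\<close>, which does not couple them.\<close>

lemma Pu_H_Pr0T: "Pu * H i * Pr0\<^sup>T = 0\<^sub>m m n"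
proof (cases i)
  case (Suc j)
  have "Pu * H i * Pr0\<^sup>T = Pu * (H i * Pr0\<^sup>T)"
    by (rule assoc_mult_mat) (rule carrier_intros H_carrier)+
  also have "\<dots> = Pu * G * Pr0\<^sup>T"
    unfolding Suc H_Suc_Pr0T by (rule assoc_mult_mat[symmetric]) (rule carrier_intros G_carrier)+
  finally show ?thesis using Pu_G_Pr0T by simp
qed simp

lemma qform_Pu_congruence:
  "X \<in> carrier_mat D D \<Longrightarrow> v \<in> carrier_vec m \<Longrightarrow> qform (Pu * X * Pu\<^sup>T) v = qform X (Pu\<^sup>T *\<^sub>v v)"
  using qform_congruence[of "Pu\<^sup>T" D m X v] by simp

lemma qform_Pu_H_Suc_pos:
  assumes v: "v \<in> carrier_vec m" "v \<noteq> 0\<^sub>v m"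
  shows "qform (Pu * H (Suc j) * Pu\<^sup>T) v > 0"
proof -
  have z: "Pu\<^sup>T *\<^sub>v v \<in> carrier_vec D" by (rule carrier_intros v)+
  have "Mcl j *\<^sub>v (Pu\<^sup>T *\<^sub>v v) \<in> carrier_vec D" by (rule carrier_intros Mcl_carrier z)+
  hence "qform R v \<le> qform G (Pu\<^sup>T *\<^sub>v v) + \<gamma> * qform (H j) (Mcl j *\<^sub>v (Pu\<^sup>T *\<^sub>v v))"
    using qform_G_PuT[OF v(1)] qform_H_nonneg \<gamma>_nonneg by simp
  also have "\<dots> = qform (Pu * H (Suc j) * Pu\<^sup>T) v"
    unfolding qform_Pu_congruence[OF H_carrier v(1)] qform_H_Suc[OF z] ..
  finally show ?thesis using qform_R_pos[OF v] by simp
qed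

lemma Pu_H_Suc_invertible: "\<exists>Hi. mat_inverse (Pu * H (Suc j) * Pu\<^sup>T) = Some Hi"
proof -
  let ?U = "Pu * H (Suc j) * Pu\<^sup>T"
  have U: "?U \<in> carrier_mat m m" by (rule carrier_intros H_carrier)+
  have "det ?U \<noteq> 0"
  proof
    assume "det ?U = 0"
    then obtain v where v: "v \<in> carrier_vec m" "v \<noteq> 0\<^sub>v m" "?U *\<^sub>v v = 0\<^sub>v m"
      using det_0_iff_vec_prod_zero[OF U] by auto
    have "qform ?U v = 0" unfolding qform_def v(3) using v(1) by simp
    thus False using qform_Pu_H_Suc_pos[OF v(1,2), of j] by simp
  qed
  show ?thesis
  proof (cases "mat_inverse ?U")
    case None
    have "?U \<notin> Units (ring_mat TYPE(real) m ())" by (rule mat_inverse(1)[OF U None])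
    moreover have "?U \<in> Units (ring_mat TYPE(real) m ())"
      by (rule det_non_zero_imp_unit[OF U \<open>det ?U \<noteq> 0\<close>])
    ultimately show ?thesis by contradiction
  qed simp
qed

lemma Mcl_Suc_mult_vec:
  assumes inv: "mat_inverse (Pu * H (Suc j) * Pu\<^sup>T) = Some Hi" and y: "y \<in> carrier_vec D"
  shows "Mcl (Suc j) *\<^sub>v y
    = M_open *\<^sub>v y + Pu\<^sup>T *\<^sub>v (- (Hi *\<^sub>v (Pu *\<^sub>v (H (Suc j) *\<^sub>v (M_open *\<^sub>v y)))))"
proof -
  let ?X = "H (Suc j)" and ?L = "gainL n m N (H (Suc j))"
  have "Pu * ?X * Pu\<^sup>T \<in> carrier_mat m m" by (rule carrier_intros H_carrier)+
  hence Hi: "Hi \<in> carrier_mat m m" using mat_inverse(2)[OF _ inv] by auto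
  have L: "?L \<in> carrier_mat m (n + N * n)" by (rule gainL_carrier[OF H_carrier])
  note carriers = carrier_intros Hi H_carrier M_open_carrier next_xr_carrier L y
  have "Mcl (Suc j) *\<^sub>v y = M_open *\<^sub>v y + (Pu\<^sup>T * (?L * next_xr)) *\<^sub>v y"
    unfolding closedM_split[OF L] by (rule add_mult_distrib_mat_vec) (rule carriers)+
  also have "(Pu\<^sup>T * (?L * next_xr)) *\<^sub>v y = Pu\<^sup>T *\<^sub>v ((?L * next_xr) *\<^sub>v y)"
    by (rule assoc_mult_mat_vec) (rule carriers)+
  also have "(?L * next_xr) *\<^sub>v y = - ((Hi * (Pu * ?X * M_open)) *\<^sub>v y)"
    unfolding gainL_mult_next_xr[OF H_carrier Pu_H_Pr0T inv] using y by (simp add: carrier_vecD)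
  also have "(Hi * (Pu * ?X * M_open)) *\<^sub>v y = Hi *\<^sub>v ((Pu * ?X * M_open) *\<^sub>v y)"
    by (rule assoc_mult_mat_vec) (rule carriers)+
  also have "(Pu * ?X * M_open) *\<^sub>v y = (Pu * ?X) *\<^sub>v (M_open *\<^sub>v y)"
    by (rule assoc_mult_mat_vec) (rule carriers)+
  also have "(Pu * ?X) *\<^sub>v (M_open *\<^sub>v y) = Pu *\<^sub>v (?X *\<^sub>v (M_open *\<^sub>v y))"
    by (rule assoc_mult_mat_vec) (rule carriers)+
  finally show ?thesis .
qed

text \<open>Only iterates \<open>H (Suc j)\<close> qualify: for \<open>H 0 = 0\<close> the block \<open>h\<^sub>u\<^sub>u\<close> is singular and
  \<open>L(0) = 0\<close> holds by convention, not by optimality.\<close>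

lemma closed_loop_optimal:
  assumes y: "y \<in> carrier_vec D" and u: "u \<in> carrier_vec m"
  shows "qform (H (Suc j)) (Mcl (Suc j) *\<^sub>v y) \<le> qform (H (Suc j)) (M_open *\<^sub>v y + Pu\<^sup>T *\<^sub>v u)"
proof -
  obtain Hi where inv: "mat_inverse (Pu * H (Suc j) * Pu\<^sup>T) = Some Hi"
    using Pu_H_Suc_invertible by blast
  have "Pu * H (Suc j) * Pu\<^sup>T \<in> carrier_mat m m" by (rule carrier_intros H_carrier)+
  hence Hi: "Hi \<in> carrier_mat m m" "Pu * H (Suc j) * Pu\<^sup>T * Hi = 1\<^sub>m m"
    using mat_inverse(2)[OF _ inv] by auto
  have w: "M_open *\<^sub>v y \<in> carrier_vec D" by (rule carrier_intros M_open_carrier y)+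
  have "qform (Pu * H (Suc j) * Pu\<^sup>T) v \<ge> 0" if "v \<in> carrier_vec m" for v
    unfolding qform_Pu_congruence[OF H_carrier that]
    by (rule qform_H_nonneg) (rule carrier_intros that)+
  thus ?thesis unfolding Mcl_Suc_mult_vec[OF inv y]
    by (intro qform_completing_square[OF H_carrier H_sym sel_carrier Hi _ w u])
qed

text \<open>\<open>ctrb_tail j\<close> keeps the last \<open>j\<close> block columns \<open>B, A B, \<dots>, A\<^sup>j\<^sup>-\<^sup>1 B\<close> of the
  controllability matrix, placed at block positions \<open>n - j, \<dots>, n - 1\<close>, and zeroes the others.\<close>

definition "ctrb_tail j = mat n (n * m)
  (\<lambda>(i, c). if n - j \<le> c div m then (A ^\<^sub>m (c div m - (n - j)) * B) $$ (i, c mod m) else 0)"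

lemma ctrb_tail_carrier[simp]: "ctrb_tail j \<in> carrier_mat n (n * m)"
  by (simp add: ctrb_tail_def)

lemma ctrb_tail_dims[simp]: "dim_row (ctrb_tail j) = n" "dim_col (ctrb_tail j) = n * m"
  by (simp_all add: ctrb_tail_def)

lemma ctrb_tail_0: "ctrb_tail 0 = 0\<^sub>m n (n * m)"
proof (rule eq_matI)
  fix i c assume "i < dim_row (0\<^sub>m n (n * m) :: real mat)" "c < dim_col (0\<^sub>m n (n * m) :: real mat)"
  moreover from this have "c div m < n" by (simp add: less_mult_imp_div_less)
  ultimately show "ctrb_tail 0 $$ (i, c) = 0\<^sub>m n (n * m) $$ (i, c)" by (simp add: ctrb_tail_def)
qed auto

lemma ctrb_tail_n: "ctrb_tail n = ctrb n m A B"
  by (rule eq_matI) (auto simp: ctrb_tail_def ctrb_def)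

lemma A_mult_ctrb_tail_index:
  assumes i: "i < n" and r: "r < m" and l: "l < n"
  shows "(A * ctrb_tail j) $$ (i, l * m + r)
    = (if n - j \<le> l then (A ^\<^sub>m Suc (l - (n - j)) * B) $$ (i, r) else 0)"
proof -
  have c: "l * m + r < n * m"
    using mult_le_mono1[OF Suc_leI[OF l], of m] r by simp
  have col: "col (ctrb_tail j) (l * m + r)
      = (if n - j \<le> l then col (A ^\<^sub>m (l - (n - j)) * B) r else 0\<^sub>v n)"
    by (rule eq_vecI) (use c r A B in \<open>auto simp: ctrb_tail_def\<close>)
  show ?thesis
  proof (cases "n - j \<le> l")
    case True
    have "(A * ctrb_tail j) $$ (i, l * m + r) = (A * (A ^\<^sub>m (l - (n - j)) * B)) $$ (i, r)"
      using i c r A B True by (simp add: col)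
    also have "A * (A ^\<^sub>m (l - (n - j)) * B) = A ^\<^sub>m Suc (l - (n - j)) * B"
      using A B by (simp add: assoc_mult_mat[symmetric, of A n n _ n B m] mult_pow_mat_Suc)
    finally show ?thesis using True by simp
  qed (use i c A in \<open>simp add: col\<close>)
qed

lemma B_mult_sel_index:
  assumes "i < n" "r < m" "l < n"
  shows "(B * sel m (q * m) (n * m)) $$ (i, l * m + r) = (if l = q then B $$ (i, r) else 0)"
proof -
  have "l * m + r < n * m"
    using mult_le_mono1[OF Suc_leI[OF assms(3)], of m] assms(2) by simp
  thus ?thesis unfolding mult_sel[OF B] using assms block_index_iff[OF assms(2), of q l] by auto
qed

lemma ctrb_tail_Suc:
  assumes j: "j < n"
  shows "ctrb_tail (Suc j) = A * ctrb_tail j + B * sel m ((n - Suc j) * m) (n * m)"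
proof (rule eq_matI)
  fix i c assume "i < dim_row (A * ctrb_tail j + B * sel m ((n - Suc j) * m) (n * m))"
    "c < dim_col (A * ctrb_tail j + B * sel m ((n - Suc j) * m) (n * m))"
  hence i: "i < n" and c: "c < n * m" using A B by auto
  hence "0 < m" by (cases m) auto
  define l r where "l = c div m" and "r = c mod m"
  have lr: "c = l * m + r" "r < m" "l < n"
    using \<open>0 < m\<close> c by (auto simp: l_def r_def less_mult_imp_div_less)
  have "A ^\<^sub>m 0 * B = B" using A B by simp
  have "(A * ctrb_tail j + B * sel m ((n - Suc j) * m) (n * m)) $$ (i, c)
      = (A * ctrb_tail j) $$ (i, c) + (B * sel m ((n - Suc j) * m) (n * m)) $$ (i, c)"
    using i c A B by simp
  also have "\<dots> = (if n - Suc j \<le> l then (A ^\<^sub>m (l - (n - Suc j)) * B) $$ (i, r) else 0)"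
    unfolding lr(1) A_mult_ctrb_tail_index[OF i lr(2,3)] B_mult_sel_index[OF i lr(2,3)]
    using j A B \<open>A ^\<^sub>m 0 * B = B\<close>
    by (cases "n - j \<le> l"; cases "l = n - Suc j") (auto simp: Suc_diff_le simp del: pow_mat.simps)
  also have "\<dots> = ctrb_tail (Suc j) $$ (i, c)"
    using i c by (simp add: ctrb_tail_def l_def r_def)
  finally show
    "ctrb_tail (Suc j) $$ (i, c) = (A * ctrb_tail j + B * sel m ((n - Suc j) * m) (n * m)) $$ (i, c)"
    by simp
qed (use A B in auto)

end

text \<open>A right inverse \<open>W\<close> of the controllability matrix yields the open-loop inputs
  \<open>steer_input 1, \<dots>, steer_input n\<close> (blocks of \<open>steer\<close>) that drive the state to \<open>0\<close>.
  \<open>steer_traj j\<close> maps an initial augmented state \<open>z\<close> to the augmented state after \<open>j\<close> steps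
  of this open loop; the input at time \<open>0\<close> is the \<open>u\<close>-component of \<open>z\<close> itself.\<close>

locale lqt_steering = lqt +
  fixes W :: "real mat"
  assumes W_carrier: "W \<in> carrier_mat (n * m) n" and ctrb_W: "ctrb n m A B * W = 1\<^sub>m n"
begin

definition "steer = - (W * (A ^\<^sub>m n * x_next))"

definition "steer_input j =
  (if j = 0 then Pu else if j \<le> n then sel m ((n - j) * m) (n * m) * steer else 0\<^sub>m m D)"

fun steer_traj :: "nat \<Rightarrow> real mat" where
  "steer_traj 0 = 1\<^sub>m D"
| "steer_traj (Suc j) = M_open * steer_traj j + Pu\<^sup>T * steer_input (Suc j)"

lemma steer_carrier[simp]: "steer \<in> carrier_mat (n * m) D"
  unfolding steer_def by (rule carrier_intros W_carrier A pow_carrier_mat x_next_carrier)+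

lemma steer_input_carrier[simp]: "steer_input j \<in> carrier_mat m D"
  unfolding steer_input_def by (auto intro!: carrier_intros steer_carrier)

lemma steer_traj_carrier[simp]: "steer_traj j \<in> carrier_mat D D"
  by (induction j) (auto intro!: carrier_intros M_open_carrier steer_input_carrier)

lemmas steer_carriers = carrier_intros A B x_next_carrier M_open_carrier pow_carrier_mat
  ctrb_tail_carrier steer_carrier steer_input_carrier steer_traj_carrier

lemma Pu_steer_traj: "Pu * steer_traj j = steer_input j"
proof (cases j)
  case (Suc k)
  have "Pu * steer_traj j = (Pu * M_open) * steer_traj k + (Pu * Pu\<^sup>T) * steer_input j"
    unfolding Suc steer_traj.simps by (rule mult_distrib_sum_of_products) (rule steer_carriers)+
  thus ?thesis unfolding Pu_M_open Pu_mult_PuT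
    by (simp add: left_mult_zero_mat[OF steer_traj_carrier]
      left_mult_one_mat[OF steer_input_carrier]
        left_add_zero_mat[OF steer_input_carrier])
qed (simp add: steer_input_def)

lemma Px_steer_traj_Suc: "Px * steer_traj (Suc j) = A * (Px * steer_traj j) + B * steer_input j"
proof -
  have "Px * steer_traj (Suc j) = (Px * M_open) * steer_traj j + (Px * Pu\<^sup>T) * steer_input (Suc j)"
    unfolding steer_traj.simps by (rule mult_distrib_sum_of_products) (rule steer_carriers)+
  also have "(Px * M_open) * steer_traj j = A * (Px * steer_traj j) + B * steer_input j"
    unfolding Px_M_open x_next_def Pu_steer_traj[symmetric]
    by (rule sum_of_products_mult_distrib) (rule steer_carriers)+
  moreover have "A * (Px * steer_traj j) + B * steer_input j \<in> carrier_mat n D"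
    by (rule steer_carriers)+
  ultimately show ?thesis
    unfolding Px_mult_PuT by (simp add: left_mult_zero_mat[OF steer_input_carrier])
qed

lemma Px_steer_traj_formula:
  "j \<le> n \<Longrightarrow> Px * steer_traj (Suc j) = A ^\<^sub>m j * x_next + ctrb_tail j * steer"
proof (induction j)
  case 0
  have "Px * steer_traj (Suc 0) = x_next"
    unfolding Px_steer_traj_Suc x_next_def using A by (simp add: steer_input_def)
  thus ?case unfolding ctrb_tail_0 using A
    by (simp add: left_mult_zero_mat[OF steer_carrier] right_add_zero_mat[OF x_next_carrier])
next
  case (Suc j)
  hence j: "j < n" by simp
  let ?S = "sel m ((n - Suc j) * m) (n * m)"
  have input: "steer_input (Suc j) = ?S * steer" using Suc.prems by (simp add: steer_input_def)
  have "Px * steer_traj (Suc (Suc j)) = A * (A ^\<^sub>m j * x_next + ctrb_tail j * steer) + B * (?S * steer)"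
    unfolding Px_steer_traj_Suc[of "Suc j"] Suc.IH[OF less_imp_le[OF j]] input ..
  also have
    "A * (A ^\<^sub>m j * x_next + ctrb_tail j * steer) = (A * A ^\<^sub>m j) * x_next + (A * ctrb_tail j) * steer"
    by (rule mult_distrib_sum_of_products) (rule steer_carriers)+
  also have "B * (?S * steer) = (B * ?S) * steer"
    by (rule assoc_mult_mat[symmetric]) (rule steer_carriers)+
  also have "(A * A ^\<^sub>m j) * x_next + (A * ctrb_tail j) * steer + (B * ?S) * steer
      = A ^\<^sub>m Suc j * x_next + (A * ctrb_tail j + B * ?S) * steer"
  proof -
    have AD: "A * ctrb_tail j \<in> carrier_mat n (n * m)" and BS: "B * ?S \<in> carrier_mat n (n * m)"
      and Ax: "A ^\<^sub>m Suc j * x_next \<in> carrier_mat n D"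
      by (rule steer_carriers)+
    show ?thesis unfolding mult_pow_mat_Suc[OF A] add_mult_distrib_mat[OF AD BS steer_carrier]
      by (rule assoc_add_mat[OF Ax mult_carrier_mat[OF AD steer_carrier]
          mult_carrier_mat[OF BS steer_carrier]])
  qed
  finally show ?case unfolding ctrb_tail_Suc[OF j] .
qed

lemma Px_steer_traj_n: "Px * steer_traj (Suc n) = 0\<^sub>m n D"
proof -
  let ?Z = "A ^\<^sub>m n * x_next"
  have Z: "?Z \<in> carrier_mat n D" by (rule steer_carriers)+
  have "ctrb n m A B * steer = - ((ctrb n m A B * W) * ?Z)"
    unfolding steer_def using W_carrier Z
    by (simp add: ctrb_def assoc_mult_mat[of _ n "n * m" W n ?Z D])
  thus ?thesis unfolding Px_steer_traj_formula[OF le_refl] ctrb_tail_n ctrb_W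
    using Z by (intro eq_matI) auto
qed

lemma Px_steer_traj_zero: "Suc n \<le> j \<Longrightarrow> Px * steer_traj j = 0\<^sub>m n D"
proof (induction j rule: dec_induct)
  case (step j)
  have "Px * steer_traj (Suc j) = A * 0\<^sub>m n D + B * 0\<^sub>m m D"
    unfolding Px_steer_traj_Suc step.IH using step.hyps by (simp add: steer_input_def)
  thus ?case using A B by simp
qed (rule Px_steer_traj_n)

lemma Pr_steer_traj_zero: "k \<le> N \<Longrightarrow> N < k + j \<Longrightarrow> Pr k * steer_traj j = 0\<^sub>m n D"
proof (induction j arbitrary: k)
  case (Suc j)
  have "Pr k * steer_traj (Suc j) = (Pr k * M_open) * steer_traj j + (Pr k * Pu\<^sup>T) * steer_input (Suc j)"
    unfolding steer_traj.simps by (rule mult_distrib_sum_of_products) (rule steer_carriers)+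
  moreover have "(Pr k * M_open) * steer_traj j = 0\<^sub>m n D"
    using Suc.IH[of "Suc k"] Suc.prems
    by (simp add: Pr_M_open left_mult_zero_mat[OF steer_traj_carrier])
  ultimately show ?case
    unfolding Pr_mult_PuT[OF Suc.prems(1)] by (simp add: left_mult_zero_mat[OF steer_input_carrier])
qed simp

lemma qform_G_steer_traj_zero:
  assumes j: "n + N < j" and z: "z \<in> carrier_vec D"
  shows "qform G (steer_traj j *\<^sub>v z) = 0"
proof -
  have "Perr * steer_traj j = 0\<^sub>m n D"
    using Px_steer_traj_zero[of j] Pr_steer_traj_zero[of 0 j] j
    by (simp add: minus_mult_distrib_mat[OF sel_carrier sel_carrier steer_traj_carrier])
  hence "Perr *\<^sub>v (steer_traj j *\<^sub>v z) = 0\<^sub>v n"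
    using z by (simp add: assoc_mult_mat_vec[symmetric, of _ n D _ D])
  moreover have "Pu *\<^sub>v (steer_traj j *\<^sub>v z) = 0\<^sub>v m"
    using z j
    by (simp add: assoc_mult_mat_vec[symmetric, of _ m D _ D] Pu_steer_traj steer_input_def)
  moreover have "steer_traj j *\<^sub>v z \<in> carrier_vec D" by (rule steer_carriers z)+
  ultimately show ?thesis using Q_carrier R_carrier by (simp add: qform_G)
qed

lemma steer_traj_Suc_mult_vec:
  assumes z: "z \<in> carrier_vec D"
  shows
    "steer_traj (Suc k) *\<^sub>v z = M_open *\<^sub>v (steer_traj k *\<^sub>v z) + Pu\<^sup>T *\<^sub>v (steer_input (Suc k) *\<^sub>v z)"
proof -
  have "steer_traj (Suc k) *\<^sub>v z = (M_open * steer_traj k) *\<^sub>v z + (Pu\<^sup>T * steer_input (Suc k)) *\<^sub>v z"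
    unfolding steer_traj.simps by (rule add_mult_distrib_mat_vec) (rule steer_carriers z)+
  also have "(M_open * steer_traj k) *\<^sub>v z = M_open *\<^sub>v (steer_traj k *\<^sub>v z)"
    by (rule assoc_mult_mat_vec) (rule steer_carriers z)+
  also have "(Pu\<^sup>T * steer_input (Suc k)) *\<^sub>v z = Pu\<^sup>T *\<^sub>v (steer_input (Suc k) *\<^sub>v z)"
    by (rule assoc_mult_mat_vec) (rule steer_carriers z)+
  finally show ?thesis .
qed

lemma closed_loop_le_steer_step:
  assumes z: "z \<in> carrier_vec D"
  shows "qform (H i) (Mcl i *\<^sub>v (steer_traj k *\<^sub>v z)) \<le> qform (H i) (steer_traj (Suc k) *\<^sub>v z)"
proof (cases i)
  case 0
  have "Mcl i *\<^sub>v (steer_traj k *\<^sub>v z) \<in> carrier_vec D" "steer_traj (Suc k) *\<^sub>v z \<in> carrier_vec D"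
    by (rule steer_carriers Mcl_carrier z)+
  thus ?thesis using 0 by simp
next
  case (Suc i')
  have "steer_traj k *\<^sub>v z \<in> carrier_vec D" "steer_input (Suc k) *\<^sub>v z \<in> carrier_vec m"
    by (rule steer_carriers z)+
  thus ?thesis unfolding Suc steer_traj_Suc_mult_vec[OF z] by (rule closed_loop_optimal)
qed

text \<open>Unrolling the recursion along the steering trajectory: at each step the closed loop
  does at least as well against the current iterate as the steering input.\<close>

lemma qform_H_steer_traj_le:
  assumes z: "z \<in> carrier_vec D"
  shows "qform (H i) (steer_traj k *\<^sub>v z) \<le> (\<Sum>j<i. \<gamma> ^ j * qform G (steer_traj (k + j) *\<^sub>v z))"
proof (induction i arbitrary: k)
  case 0
  have "steer_traj k *\<^sub>v z \<in> carrier_vec D" by (rule steer_carriers z)+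
  thus ?case by simp
next
  case (Suc i)
  have "steer_traj k *\<^sub>v z \<in> carrier_vec D" by (rule steer_carriers z)+
  hence "qform (H (Suc i)) (steer_traj k *\<^sub>v z)
      = qform G (steer_traj k *\<^sub>v z) + \<gamma> * qform (H i) (Mcl i *\<^sub>v (steer_traj k *\<^sub>v z))"
    by (rule qform_H_Suc)
  also have
    "\<dots> \<le> qform G (steer_traj k *\<^sub>v z) + \<gamma> * (\<Sum>j<i. \<gamma> ^ j * qform G (steer_traj (Suc k + j) *\<^sub>v z))"
    using closed_loop_le_steer_step[OF z, of i k] Suc.IH[of "Suc k"] \<gamma>_nonneg
    by (simp add: mult_left_mono)
  also have "\<dots> = (\<Sum>j<Suc i. \<gamma> ^ j * qform G (steer_traj (k + j) *\<^sub>v z))"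
    unfolding sum.lessThan_Suc_shift
    by (simp add: sum_distrib_left mult.assoc del: steer_traj.simps sum.lessThan_Suc)
  finally show ?case .
qed

fun steer_cost :: "nat \<Rightarrow> real mat" where
  "steer_cost 0 = 0\<^sub>m D D"
| "steer_cost (Suc j) = steer_cost j + (steer_traj j)\<^sup>T * G * steer_traj j"

declare steer_cost.simps(2)[simp del]

lemma steer_cost_carrier: "steer_cost j \<in> carrier_mat D D"
  by (induction j) (auto simp: steer_cost.simps intro!: carrier_intros G_carrier steer_traj_carrier)

lemma steer_cost_sym: "(steer_cost j)\<^sup>T = steer_cost j"
proof (induction j)
  case (Suc j)
  have "(steer_cost (Suc j))\<^sup>T = (steer_cost j)\<^sup>T + ((steer_traj j)\<^sup>T * G * steer_traj j)\<^sup>T"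
    unfolding steer_cost.simps
    by (rule transpose_add) (rule steer_carriers G_carrier steer_cost_carrier)+
  thus ?case using Suc symmetric_congruence_transpose[OF G_carrier G_sym steer_traj_carrier]
    by (simp add: steer_cost.simps)
qed (auto intro!: eq_matI)

lemma qform_steer_cost:
  assumes z: "z \<in> carrier_vec D"
  shows "qform (steer_cost K) z = (\<Sum>j<K. qform G (steer_traj j *\<^sub>v z))"
proof (induction K)
  case (Suc K)
  have "qform (steer_cost (Suc K)) z = qform (steer_cost K) z + qform ((steer_traj K)\<^sup>T * G * steer_traj K) z"
    unfolding steer_cost.simps
    by (rule qform_add) (rule steer_carriers G_carrier steer_cost_carrier z)+
  thus ?case using Suc qform_congruence[OF steer_traj_carrier G_carrier z] by simp
qed (use z in simp)

lemma qform_H_le_steer_cost: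
  assumes z: "z \<in> carrier_vec D"
  shows "qform (H i) z \<le> qform (steer_cost (n + N + 1)) z"
proof -
  let ?K = "n + N + 1"
  define g where "g j = qform G (steer_traj j *\<^sub>v z)" for j
  have g_nonneg: "g j \<ge> 0" for j
    unfolding g_def by (rule qform_G_nonneg) (rule steer_carriers z)+
  have g_vanish: "g j = 0" if "?K \<le> j" for j
    unfolding g_def using that by (intro qform_G_steer_traj_zero z) simp
  have "qform (H i) z \<le> (\<Sum>j<i. \<gamma> ^ j * g j)"
    using qform_H_steer_traj_le[OF z, of i 0] z by (simp add: g_def)
  also have "\<dots> \<le> (\<Sum>j<i. g j)"
    using \<gamma>_nonneg \<gamma>_less_1 g_nonneg
    by (intro sum_mono) (simp add: mult_left_le_one_le power_le_one)
  also have "\<dots> \<le> (\<Sum>j<max i ?K. g j)"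
    by (rule sum_mono2) (use g_nonneg in auto)
  also have "\<dots> = (\<Sum>j<?K. g j)"
    by (rule sum.mono_neutral_right) (use g_vanish in auto)
  finally show ?thesis unfolding qform_steer_cost[OF z] g_def .
qed

lemma H_le_steer_cost: "psd D (steer_cost (n + N + 1) - H i)"
proof -
  let ?Y = "steer_cost (n + N + 1)"
  have "(?Y - H i)\<^sup>T = ?Y - H i"
    using transpose_minus[OF steer_cost_carrier H_carrier] steer_cost_sym H_sym by simp
  moreover have "qform (?Y - H i) v \<ge> 0" if "v \<in> carrier_vec D" for v
    using qform_diff[OF steer_cost_carrier H_carrier that] qform_H_le_steer_cost[OF that] by simp
  ultimately show ?thesis
    unfolding psd_iff_qform by (blast intro: minus_carrier_mat steer_cost_carrier H_carrier)
qed

end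

theorem lemma7:
  fixes n m N :: nat and A B Q R :: "real mat" and \<gamma> :: real
  assumes "A \<in> carrier_mat n n" and "B \<in> carrier_mat n m"
    and "psd n Q" and "pd m R"
    and "0 \<le> \<gamma>" and "\<gamma> < 1"
    and "controllable n m A B"
  shows "\<exists>Y. \<forall>i. loewner_le (dimH n m N) (0\<^sub>m (dimH n m N) (dimH n m N)) (Hseq n m N A B Q R \<gamma> i)
              \<and> loewner_le (dimH n m N) (Hseq n m N A B Q R \<gamma> i) Y"
proof -
  interpret lqt n m N A B Q R \<gamma>
    using assms by unfold_locales
  obtain W where "W \<in> carrier_mat (n * m) n" "ctrb n m A B * W = 1\<^sub>m n"
    using full_rank_right_inverse[of "ctrb n m A B" n "n * m"] assms(7)
    by (auto simp: controllable_def ctrb_def)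
  then interpret lqt_steering n m N A B Q R \<gamma> W
    by unfold_locales
  have "H i - 0\<^sub>m D D = H i" for i
    using H_carrier[of i] by (intro eq_matI) auto
  hence "loewner_le D (0\<^sub>m D D) (H i) \<and> loewner_le D (H i) (steer_cost (n + N + 1))" for i
    unfolding loewner_le_def using H_psd H_le_steer_cost H_carrier steer_cost_carrier by simp
  thus ?thesis by blast
qed

end
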